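(* Let $r\ge3$, $n>r$. (i) There is a unique automorphism $\nu$ of $T$, of order $n$, with $\nu(E_i)=E_{i+1}$, $\nu(F_i)=F_{i+1}$, $\nu(K_i^{\pm1})=K_{i+1}^{\pm1}$ for all $1\le i\le n$ (subscripts mod $n$); it satisfies $\nu(1_\lambda)=1_{\lambda_+}$ for $\lambda\in\Lambda(n,r)$, where $\lambda_+=(\lambda_n,\lambda_1,\lambda_2,\dots,\lambda_{n-1})$. (ii) There is a unique anti-automorphism $\sigma$ of $T$ with $\sigma(E_i)=F_i$, $\sigma(F_i)=E_i$, $\sigma(K_i^{\pm1})=K_i^{\pm1}$ for all $1\le i\le n$; it fixes every $1_\lambda$.
   Context: $T$ is the $\mathbb{Q}(v)$-algebra with generators $E_i,F_i,K_i^{\pm1}$ ($1\le i\le n$, indices mod $n$) and relations: $K_iK_j=K_jK_i$; $K_iK_i^{-1}=K_i^{-1}K_i=1$; $K_iE_j=v^{\epsilon^+(i,j)}E_jK_i$; $K_iF_j=v^{-\epsilon^+(i,j)}F_jK_i$ ($\epsilon^+(i,j)=1$ if $j=i$, $-1$ if $j\equiv i-1\pmod n$, $0$ otherwise); $E_iF_j-F_jE_i=\delta_{ij}\frac{K_iK_{i+1}^{-1}-K_i^{-1}K_{i+1}}{v-v^{-1}}$; $E_iE_j=E_jE_i$, $F_iF_j=F_jF_i$ if $i-j\not\equiv\pm1$; $E_i^2E_j-(v+v^{-1})E_iE_jE_i+E_jE_i^2=0$, $F_i^2F_j-(v+v^{-1})F_iF_jF_i+F_jF_i^2=0$ if $i-j\equiv\pm1\pmod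 n$; $K_1\cdots K_n=v^r$; $\prod_{j=0}^r(K_i-v^j)=0$. $\Lambda(n,r)$: compositions of $r$ into $n$ nonnegative parts. $1_\lambda=\prod_{i=1}^n\prod_{s=1}^{\lambda_i}\frac{K_iv^{-s+1}-K_i^{-1}v^{s-1}}{v^s-v^{-s}}$. *)

theory Defs
  imports Main "HOL-Library.Poly_Mapping" "HOL-Computational_Algebra.Polynomial"
          "HOL-Computational_Algebra.Fraction_Field"
begin

type_synonym qv = "rat poly fract"

definition vv :: qv where "vv = Fract [:0, 1:] 1"

text \<open>Indices are 0-based: 0..n-1, taken mod n (a shift of the paper's 1..n).\<close>

datatype gen = GE nat | GF nat | GK nat | GKi nat

fun gidx :: "gen \<Rightarrow> nat" where
  "gidx (GE i) = i" | "gidx (GF i) = i" | "gidx (GK i) = i" | "gidx (GKi i) = i"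

type_synonym fa = "gen list \<Rightarrow>\<^sub>0 qv"

definition fmul :: "fa \<Rightarrow> fa \<Rightarrow> fa" where
  "fmul p q = (\<Sum>u\<in>Poly_Mapping.keys p. \<Sum>w\<in>Poly_Mapping.keys q.
      Poly_Mapping.single (u @ w) (Poly_Mapping.lookup p u * Poly_Mapping.lookup q w))"

definition fsc :: "qv \<Rightarrow> fa \<Rightarrow> fa" where
  "fsc c p = (\<Sum>u\<in>Poly_Mapping.keys p. Poly_Mapping.single u (c * Poly_Mapping.lookup p u))"

definition fone :: fa where "fone = Poly_Mapping.single [] 1"

definition fgen :: "gen \<Rightarrow> fa" where "fgen g = Poly_Mapping.single [g] 1"

definition fprod :: "fa list \<Rightarrow> fa" where "fprod xs = foldr fmul xs fone"

definition FA :: "nat \<Rightarrow> fa set" where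
  "FA n = {p. \<forall>w\<in>Poly_Mapping.keys p. \<forall>g\<in>set w. gidx g < n}"

definition epsp :: "nat \<Rightarrow> nat \<Rightarrow> nat \<Rightarrow> int" where
  "epsp n i j = (if j = i then 1 else if j = (i + n - 1) mod n then -1 else 0)"

definition adj :: "nat \<Rightarrow> nat \<Rightarrow> nat \<Rightarrow> bool" where
  "adj n i j \<longleftrightarrow> j = (i + 1) mod n \<or> i = (j + 1) mod n"

abbreviation "fE i \<equiv> fgen (GE i)"
abbreviation "fF i \<equiv> fgen (GF i)"
abbreviation "fK i \<equiv> fgen (GK i)"
abbreviation "fKi i \<equiv> fgen (GKi i)"

definition Rels :: "nat \<Rightarrow> nat \<Rightarrow> fa set" where
  "Rels n r =
     {fmul (fK i) (fK j) - fmul (fK j) (fK i) | i j. i < n \<and> j < n}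
   \<union> {fmul (fK i) (fKi i) - fone | i. i < n}
   \<union> {fmul (fKi i) (fK i) - fone | i. i < n}
   \<union> {fmul (fK i) (fE j) - fsc (vv powi epsp n i j) (fmul (fE j) (fK i)) | i j. i < n \<and> j < n}
   \<union> {fmul (fK i) (fF j) - fsc (vv powi (- epsp n i j)) (fmul (fF j) (fK i)) | i j. i < n \<and> j < n}
   \<union> {fmul (fE i) (fF j) - fmul (fF j) (fE i)
        - (if i = j then fsc (1 / (vv - 1 / vv))
              (fmul (fK i) (fKi ((i + 1) mod n)) - fmul (fKi i) (fK ((i + 1) mod n)))
           else 0) | i j. i < n \<and> j < n}
   \<union> {fmul (fE i) (fE j) - fmul (fE j) (fE i) | i j. i < n \<and> j < n \<and> \<not> adj n i j}
   \<union> {fmul (fF i) (fF j) - fmul (fF j) (fF i) | i j. i < n \<and> j < n \<and> \<not> adj n i j}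
   \<union> {fprod [fE i, fE i, fE j] - fsc (vv + 1 / vv) (fprod [fE i, fE j, fE i])
        + fprod [fE j, fE i, fE i] | i j. i < n \<and> j < n \<and> adj n i j}
   \<union> {fprod [fF i, fF i, fF j] - fsc (vv + 1 / vv) (fprod [fF i, fF j, fF i])
        + fprod [fF j, fF i, fF i] | i j. i < n \<and> j < n \<and> adj n i j}
   \<union> {fprod (map fK [0..<n]) - fsc (vv ^ r) fone}
   \<union> {fprod (map (\<lambda>j. fK i - fsc (vv ^ j) fone) [0..<r + 1]) | i. i < n}"

inductive_set Id :: "nat \<Rightarrow> nat \<Rightarrow> fa set" for n r where
  rel: "p \<in> Rels n r \<Longrightarrow> p \<in> Id n r"
| zero: "0 \<in> Id n r"
| add: "p \<in> Id n r \<Longrightarrow> q \<in> Id n r \<Longrightarrow> p + q \<in> Id n r"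
| smul: "p \<in> Id n r \<Longrightarrow> fsc c p \<in> Id n r"
| mul: "p \<in> Id n r \<Longrightarrow> a \<in> FA n \<Longrightarrow> b \<in> FA n \<Longrightarrow> fmul a (fmul p b) \<in> Id n r"

definition cls :: "nat \<Rightarrow> nat \<Rightarrow> fa \<Rightarrow> fa set" where
  "cls n r p = {q \<in> FA n. q - p \<in> Id n r}"

definition Tcar :: "nat \<Rightarrow> nat \<Rightarrow> fa set set" where
  "Tcar n r = cls n r ` FA n"

definition rep :: "fa set \<Rightarrow> fa" where "rep A = (SOME p. p \<in> A)"

definition Tadd :: "nat \<Rightarrow> nat \<Rightarrow> fa set \<Rightarrow> fa set \<Rightarrow> fa set" where
  "Tadd n r A B = cls n r (rep A + rep B)"

definition Tmul :: "nat \<Rightarrow> nat \<Rightarrow> fa set \<Rightarrow> fa set \<Rightarrow> fa set" where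
  "Tmul n r A B = cls n r (fmul (rep A) (rep B))"

definition Tsmul :: "nat \<Rightarrow> nat \<Rightarrow> qv \<Rightarrow> fa set \<Rightarrow> fa set" where
  "Tsmul n r c A = cls n r (fsc c (rep A))"

definition Tone :: "nat \<Rightarrow> nat \<Rightarrow> fa set" where "Tone n r = cls n r fone"

definition Tgen :: "nat \<Rightarrow> nat \<Rightarrow> gen \<Rightarrow> fa set" where "Tgen n r g = cls n r (fgen g)"

definition Comps :: "nat \<Rightarrow> nat \<Rightarrow> (nat \<Rightarrow> nat) set" where
  "Comps n r = {lam. (\<forall>i\<ge>n. lam i = 0) \<and> (\<Sum>i<n. lam i) = r}"

text \<open>lambda_+ = (lambda_n, lambda_1, ..., lambda_{n-1}); 0-based: mu i = lambda (i-1 mod n).\<close>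
definition shiftc :: "nat \<Rightarrow> (nat \<Rightarrow> nat) \<Rightarrow> nat \<Rightarrow> nat" where
  "shiftc n lam i = (if i < n then lam ((i + n - 1) mod n) else 0)"

definition fidem :: "nat \<Rightarrow> (nat \<Rightarrow> nat) \<Rightarrow> fa" where
  "fidem n lam = fprod (map (\<lambda>i. fprod (map (\<lambda>s.
       fsc (1 / (vv ^ s - vv powi (- int s)))
         (fsc (vv powi (1 - int s)) (fK i) - fsc (vv powi (int s - 1)) (fKi i)))
       [1..<lam i + 1])) [0..<n])"

definition Tidem :: "nat \<Rightarrow> nat \<Rightarrow> (nat \<Rightarrow> nat) \<Rightarrow> fa set" where
  "Tidem n r lam = cls n r (fidem n lam)"

definition T_lin :: "nat \<Rightarrow> nat \<Rightarrow> (fa set \<Rightarrow> fa set) \<Rightarrow> bool" where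
  "T_lin n r \<phi> \<longleftrightarrow> bij_betw \<phi> (Tcar n r) (Tcar n r)
     \<and> (\<forall>A\<in>Tcar n r. \<forall>B\<in>Tcar n r. \<phi> (Tadd n r A B) = Tadd n r (\<phi> A) (\<phi> B))
     \<and> (\<forall>c. \<forall>A\<in>Tcar n r. \<phi> (Tsmul n r c A) = Tsmul n r c (\<phi> A))
     \<and> \<phi> (Tone n r) = Tone n r"

definition T_aut :: "nat \<Rightarrow> nat \<Rightarrow> (fa set \<Rightarrow> fa set) \<Rightarrow> bool" where
  "T_aut n r \<phi> \<longleftrightarrow> T_lin n r \<phi>
     \<and> (\<forall>A\<in>Tcar n r. \<forall>B\<in>Tcar n r. \<phi> (Tmul n r A B) = Tmul n r (\<phi> A) (\<phi> B))"

definition T_antiaut :: "nat \<Rightarrow> nat \<Rightarrow> (fa set \<Rightarrow> fa set) \<Rightarrow> bool" where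
  "T_antiaut n r \<phi> \<longleftrightarrow> T_lin n r \<phi>
     \<and> (\<forall>A\<in>Tcar n r. \<forall>B\<in>Tcar n r. \<phi> (Tmul n r A B) = Tmul n r (\<phi> B) (\<phi> A))"

definition nu_gens :: "nat \<Rightarrow> nat \<Rightarrow> (fa set \<Rightarrow> fa set) \<Rightarrow> bool" where
  "nu_gens n r \<phi> \<longleftrightarrow> (\<forall>i<n.
       \<phi> (Tgen n r (GE i)) = Tgen n r (GE ((i + 1) mod n))
     \<and> \<phi> (Tgen n r (GF i)) = Tgen n r (GF ((i + 1) mod n))
     \<and> \<phi> (Tgen n r (GK i)) = Tgen n r (GK ((i + 1) mod n))
     \<and> \<phi> (Tgen n r (GKi i)) = Tgen n r (GKi ((i + 1) mod n)))"

definition sigma_gens :: "nat \<Rightarrow> nat \<Rightarrow> (fa set \<Rightarrow> fa set) \<Rightarrow> bool" where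
  "sigma_gens n r \<phi> \<longleftrightarrow> (\<forall>i<n.
       \<phi> (Tgen n r (GE i)) = Tgen n r (GF i)
     \<and> \<phi> (Tgen n r (GF i)) = Tgen n r (GE i)
     \<and> \<phi> (Tgen n r (GK i)) = Tgen n r (GK i)
     \<and> \<phi> (Tgen n r (GKi i)) = Tgen n r (GKi i))"

end

(* On the free algebra, \<nu> is the homomorphism shifting every index by one and \<sigma> is
   the antihomomorphism exchanging E_i and F_i. Both map each defining relation into the ideal:
   \<nu> permutes the relations, except that it rotates the product K_0 \<cdots> K_(n-1); \<sigma> sends each
   relation to a multiple of another one, up to reordering products of K's. Both arguments use
   that the K_i and K_i^-1 commute in T. Hence \<nu> and \<sigma> descend to T; they are bijective since
   \<nu>^n and \<sigma>^2 are the identity, and unique since T is generated by the E_i, F_i, K_i^(+-1).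
   Since 1_\<lambda> is a product of polynomials in single K_i's, \<nu> rotates its factors, giving 1_\<lambda>+,
   and \<sigma> merely reverses them.
   That \<nu> has order exactly n needs K_0 \<noteq> K_m in T for 0 < m < n. For this, T acts on the span
   of the r-element subsets of {0..n-1}, K_i multiplying a subset by v when it contains i; as
   0 < r < n, some r-subset contains 0 but not m. *)

theory Submission
  imports Defs
begin

lemma vv_neq_0: "vv \<noteq> 0"
  by (simp add: vv_def Zero_fract_def eq_fract)

lemma vv_neq_1: "vv \<noteq> 1"
proof -
  have "degree ([:0, 1:] :: rat poly) \<noteq> degree (1 :: rat poly)" by simp
  then have "[:0, 1:] \<noteq> (1 :: rat poly)" by metis
  then show ?thesis by (simp add: vv_def One_fract_def eq_fract)
qed

lemma vv_neq_inverse: "vv \<noteq> 1 / vv"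
proof -
  have "degree ([:0, 1:] * [:0, 1:] :: rat poly) \<noteq> degree (1 :: rat poly)"
    by (subst degree_mult_eq) auto
  then have "[:0, 1:] * [:0, 1:] \<noteq> (1 :: rat poly)" by metis
  then have "vv * vv \<noteq> 1" by (simp add: vv_def One_fract_def eq_fract mult_fract)
  then show ?thesis using vv_neq_0 by (auto simp: field_simps)
qed

text \<open>With concatenation as addition, the convolution product that Poly_Mapping puts on
  \<open>gen list \<Rightarrow>\<^sub>0 qv\<close> is the product of the free algebra.\<close>

instantiation list :: (type) monoid_add
begin
definition zero_list :: "'a list" where "zero_list = []"
definition plus_list :: "'a list \<Rightarrow> 'a list \<Rightarrow> 'a list" where "plus_list xs ys = xs @ ys"
instance by standard (auto simp: zero_list_def plus_list_def)
end

abbreviation mon :: "gen list \<Rightarrow> qv \<Rightarrow> fa" where "mon \<equiv> Poly_Mapping.single"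
abbreviation coef :: "fa \<Rightarrow> gen list \<Rightarrow> qv" where "coef \<equiv> Poly_Mapping.lookup"
abbreviation supp :: "fa \<Rightarrow> gen list set" where "supp \<equiv> Poly_Mapping.keys"
abbreviation scal :: "qv \<Rightarrow> fa" where "scal c \<equiv> mon [] c"

lemma mon_mult: "mon u a * mon w b = mon (u @ w) (a * b)"
  using mult_single[of u a w b] by (simp add: plus_list_def)

lemma one_eq_scal: "(1::fa) = scal 1"
  by (metis single_one zero_list_def)

lemma sum_mon_coef: "(\<Sum>w\<in>supp p. mon w (coef p w)) = p"
proof (rule poly_mapping_eqI)
  fix x
  have "(\<Sum>w\<in>supp p. coef (mon w (coef p w)) x) = (\<Sum>w\<in>supp p. if w = x then coef p w else 0)"
    by (rule sum.cong) (auto simp: lookup_single when_def)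
  then show "coef (\<Sum>w\<in>supp p. mon w (coef p w)) x = coef p x"
    by (simp add: lookup_sum in_keys_iff)
qed

lemma fa_induct[case_names zero mon add]:
  assumes "P 0"
    and "\<And>w c. w \<in> supp p \<Longrightarrow> P (mon w c)"
    and "\<And>q q'. supp q \<subseteq> supp p \<Longrightarrow> supp q' \<subseteq> supp p \<Longrightarrow> P q \<Longrightarrow> P q' \<Longrightarrow> P (q + q')"
  shows "P p"
proof -
  have "P (\<Sum>w\<in>W. mon w (coef p w))" if "W \<subseteq> supp p" for W
  proof -
    have "finite W" using that by (rule finite_subset) simp
    then show ?thesis using that
    proof induct
      case (insert w W)
      have "supp (\<Sum>w\<in>W. mon w (coef p w)) \<subseteq> supp p"
        using keys_sum[of "\<lambda>w. mon w (coef p w)" W] insert by auto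
      then show ?case
        using insert assms(2)[of w] assms(3)[of "mon w (coef p w)" "\<Sum>w\<in>W. mon w (coef p w)"]
        by auto
    qed (simp add: assms(1))
  qed
  from this[of "supp p"] show ?thesis by (simp add: sum_mon_coef)
qed

lemma fmul_eq: "fmul p q = p * q"
proof -
  have "p * q = (\<Sum>u\<in>supp p. mon u (coef p u)) * (\<Sum>w\<in>supp q. mon w (coef q w))"
    by (simp add: sum_mon_coef)
  then show ?thesis unfolding sum_product fmul_def by (simp add: mon_mult)
qed

lemma fsc_eq: "fsc c p = scal c * p"
proof -
  have "scal c * p = scal c * (\<Sum>u\<in>supp p. mon u (coef p u))" by (simp add: sum_mon_coef)
  then show ?thesis unfolding sum_distrib_left fsc_def by (simp add: mon_mult)
qed

lemma fone_eq: "fone = 1"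
  by (simp add: fone_def one_eq_scal)

lemma fprod_eq: "fprod xs = prod_list xs"
  by (induct xs) (auto simp: fprod_def fone_eq fmul_eq)

lemma fgen_eq: "fgen g = mon [g] 1"
  by (simp add: fgen_def)

lemma scal_commute: "scal c * p = p * scal c"
  by (induct p rule: fa_induct) (auto simp: mon_mult distrib_left distrib_right mult.commute)

lemma scal_mult: "scal c * scal d = scal (c * d)"
  by (simp add: mon_mult)

lemma scal_minus_one: "scal (- 1) * p = - p"
  by (simp add: single_uminus one_eq_scal[symmetric])

definition lin_ext :: "(gen list \<Rightarrow> qv) \<Rightarrow> fa \<Rightarrow> qv" where
  "lin_ext g p = (\<Sum>w\<in>supp p. coef p w * g w)"

lemma lin_ext_add[simp]: "lin_ext g (p + q) = lin_ext g p + lin_ext g q"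
  unfolding lin_ext_def by (rule setsum_keys_plus_distrib) (auto simp: distrib_right)

lemma lin_ext_mon[simp]: "lin_ext g (mon w c) = c * g w"
  by (cases "c = 0") (auto simp: lin_ext_def)

lemma lin_ext_zero[simp]: "lin_ext g 0 = 0"
  by (simp add: lin_ext_def)

lemma lin_ext_uminus[simp]: "lin_ext g (- p) = - lin_ext g p"
  by (metis add_eq_0_iff lin_ext_add lin_ext_zero right_minus)

lemma lin_ext_diff[simp]: "lin_ext g (p - q) = lin_ext g p - lin_ext g q"
  by (metis lin_ext_add lin_ext_uminus diff_conv_add_uminus)

lemma lin_ext_scal_mult[simp]: "lin_ext g (scal c * p) = c * lin_ext g p"
  by (induct p rule: fa_induct) (auto simp: mon_mult distrib_left)

lemma lin_ext_cmult: "lin_ext (\<lambda>w. k * g w) p = k * lin_ext g p"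
  by (simp add: lin_ext_def sum_distrib_left mult.left_commute)

lemma lin_ext_cong: "(\<And>w. w \<in> supp p \<Longrightarrow> g w = h w) \<Longrightarrow> lin_ext g p = lin_ext h p"
  by (simp add: lin_ext_def)

lemma lin_ext_mon_mult: "lin_ext g (mon u c * p) = c * lin_ext (\<lambda>w. g (u @ w)) p"
  by (induct p rule: fa_induct) (auto simp: mon_mult distrib_left)

lemma lin_ext_mult_mon: "lin_ext g (p * mon u c) = c * lin_ext (\<lambda>w. g (w @ u)) p"
  by (induct p rule: fa_induct) (auto simp: mon_mult distrib_left distrib_right)

lemma lin_ext_mult:
  assumes "\<And>u w. g (u @ w) = g u * g w"
  shows "lin_ext g (p * q) = lin_ext g p * lin_ext g q"
proof (induct p rule: fa_induct)
  case (mon w c)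
  show ?case by (simp add: lin_ext_mon_mult assms lin_ext_cmult)
qed (auto simp: distrib_right)

lemma lin_ext_prod_list:
  assumes "\<And>u w. g (u @ w) = g u * g w" and "g [] = 1"
  shows "lin_ext g (prod_list ps) = prod_list (map (lin_ext g) ps)"
  by (induct ps) (auto simp: lin_ext_mult assms one_eq_scal)

definition map_words :: "(gen list \<Rightarrow> gen list) \<Rightarrow> fa \<Rightarrow> fa" where
  "map_words f p = (\<Sum>w\<in>supp p. mon (f w) (coef p w))"

lemma map_words_add[simp]: "map_words f (p + q) = map_words f p + map_words f q"
  unfolding map_words_def by (rule setsum_keys_plus_distrib) (auto simp: single_add)

lemma map_words_mon[simp]: "map_words f (mon w c) = mon (f w) c"
  by (cases "c = 0") (auto simp: map_words_def)

lemma map_words_zero[simp]: "map_words f 0 = 0"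
  by (simp add: map_words_def)

lemma map_words_uminus[simp]: "map_words f (- p) = - map_words f p"
  by (metis add_eq_0_iff map_words_add map_words_zero right_minus)

lemma map_words_diff[simp]: "map_words f (p - q) = map_words f p - map_words f q"
  by (metis map_words_add map_words_uminus diff_conv_add_uminus)

lemma map_words_mult:
  assumes "\<And>u w. f (u @ w) = f u @ f w"
  shows "map_words f (p * q) = map_words f p * map_words f q"
proof (induct p rule: fa_induct)
  case (mon w c)
  show ?case by (induct q rule: fa_induct) (auto simp: mon_mult assms distrib_left)
qed (auto simp: distrib_right)

lemma map_words_mult_anti:
  assumes "\<And>u w. f (u @ w) = f w @ f u"
  shows "map_words f (p * q) = map_words f q * map_words f p"
proof (induct p rule: fa_induct)
  case (mon w c)
  show ?case
    by (induct q rule: fa_induct)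
      (auto simp: mon_mult assms distrib_left distrib_right mult.commute)
qed (auto simp: distrib_left distrib_right)

lemma map_words_comp: "map_words f (map_words g p) = map_words (f \<circ> g) p"
  by (induct p rule: fa_induct) auto

lemma map_words_id_on: "(\<And>w. w \<in> supp p \<Longrightarrow> f w = w) \<Longrightarrow> map_words f p = p"
  unfolding map_words_def by (metis (no_types, lifting) sum.cong sum_mon_coef)

lemma supp_map_words: "supp (map_words f p) \<subseteq> f ` supp p"
  using keys_sum[of "\<lambda>w. mon (f w) (coef p w)" "supp p"] by (auto simp: map_words_def)

definition word_below :: "nat \<Rightarrow> gen list \<Rightarrow> bool" where
  "word_below n w \<longleftrightarrow> (\<forall>g\<in>set w. gidx g < n)"

lemma word_below_simps[simp]:
  "word_below n []"
  "word_below n (g # w) \<longleftrightarrow> gidx g < n \<and> word_below n w"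
  "word_below n (u @ w) \<longleftrightarrow> word_below n u \<and> word_below n w"
  by (auto simp: word_below_def)

lemma FA_iff: "p \<in> FA n \<longleftrightarrow> (\<forall>w\<in>supp p. word_below n w)"
  by (simp add: FA_def word_below_def)

lemma FA_subset: "p \<in> FA n \<Longrightarrow> supp q \<subseteq> supp p \<Longrightarrow> q \<in> FA n"
  by (auto simp: FA_iff)

lemma FA_0[simp]: "0 \<in> FA n" and FA_mon[simp]: "word_below n w \<Longrightarrow> mon w c \<in> FA n"
  and FA_1[simp]: "1 \<in> FA n"
  by (simp_all add: FA_iff one_eq_scal)

lemma FA_add[simp]: "p \<in> FA n \<Longrightarrow> q \<in> FA n \<Longrightarrow> p + q \<in> FA n"
  using keys_add[of p q] by (auto simp: FA_iff)

lemma FA_mult[simp]: "p \<in> FA n \<Longrightarrow> q \<in> FA n \<Longrightarrow> p * q \<in> FA n"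
  using keys_mult[of p q] by (fastforce simp: FA_iff plus_list_def)

lemma FA_fgen[simp]: "gidx g < n \<Longrightarrow> fgen g \<in> FA n"
  by (simp add: fgen_eq)

lemma Id_scal_mult: "p \<in> Id n r \<Longrightarrow> scal c * p \<in> Id n r"
  using Id.smul[of p n r c] by (simp add: fsc_eq)

lemma Id_uminus: "p \<in> Id n r \<Longrightarrow> - p \<in> Id n r"
  using Id_scal_mult[of p n r "- 1"] by (simp add: scal_minus_one)

lemma Id_diff: "p \<in> Id n r \<Longrightarrow> q \<in> Id n r \<Longrightarrow> p - q \<in> Id n r"
  by (metis Id.add Id_uminus diff_conv_add_uminus)

lemma Id_mult: "p \<in> Id n r \<Longrightarrow> a \<in> FA n \<Longrightarrow> b \<in> FA n \<Longrightarrow> a * p * b \<in> Id n r"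
  using Id.mul[of p n r a b] by (simp add: fmul_eq mult.assoc)

definition eqv :: "nat \<Rightarrow> nat \<Rightarrow> fa \<Rightarrow> fa \<Rightarrow> bool" where
  "eqv n r p q \<longleftrightarrow> p - q \<in> Id n r"

lemma eqv_refl[simp]: "eqv n r p p"
  by (simp add: eqv_def Id.zero)

lemma eqv_sym: "eqv n r p q \<Longrightarrow> eqv n r q p"
  unfolding eqv_def using Id_uminus[of "p - q" n r] by simp

lemma eqv_trans[trans]: "eqv n r p q \<Longrightarrow> eqv n r q s \<Longrightarrow> eqv n r p s"
  unfolding eqv_def using Id.add[of "p - q" n r "q - s"] by simp

lemma eqv_add: "eqv n r p q \<Longrightarrow> eqv n r p' q' \<Longrightarrow> eqv n r (p + p') (q + q')"
  unfolding eqv_def using Id.add[of "p - q" n r "p' - q'"] by (simp add: algebra_simps)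

lemma eqv_diff: "eqv n r p q \<Longrightarrow> eqv n r p' q' \<Longrightarrow> eqv n r (p - p') (q - q')"
  unfolding eqv_def using Id_diff[of "p - q" n r "p' - q'"] by (simp add: algebra_simps)

lemma eqv_scal_mult: "eqv n r p q \<Longrightarrow> eqv n r (scal c * p) (scal c * q)"
  unfolding eqv_def using Id_scal_mult[of "p - q" n r c] by (simp add: algebra_simps)

lemma eqv_mult_context: "eqv n r p q \<Longrightarrow> a \<in> FA n \<Longrightarrow> b \<in> FA n \<Longrightarrow> eqv n r (a * p * b) (a * q * b)"
  unfolding eqv_def using Id_mult[of "p - q" n r a b] by (simp add: algebra_simps)

lemma eqv_mult:
  assumes "eqv n r a a'" "eqv n r b b'" "a' \<in> FA n" "b \<in> FA n"
  shows "eqv n r (a * b) (a' * b')"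
proof -
  have "eqv n r (a * b) (a' * b)" using eqv_mult_context[OF assms(1) FA_1 assms(4)] by simp
  also have "eqv n r (a' * b) (a' * b')" using eqv_mult_context[OF assms(2) assms(3) FA_1] by simp
  finally show ?thesis .
qed

lemma Id_eqv: "eqv n r p q \<Longrightarrow> q \<in> Id n r \<Longrightarrow> p \<in> Id n r"
  unfolding eqv_def using Id.add[of "p - q" n r q] by simp

lemma cls_mem: "p \<in> FA n \<Longrightarrow> p \<in> cls n r p"
  by (simp add: cls_def Id.zero)

lemma rep_cls: "p \<in> FA n \<Longrightarrow> rep (cls n r p) \<in> FA n \<and> eqv n r (rep (cls n r p)) p"
  using someI[of "\<lambda>q. q \<in> cls n r p", OF cls_mem] by (simp add: rep_def cls_def eqv_def)

lemma cls_eq_iff: "p \<in> FA n \<Longrightarrow> q \<in> FA n \<Longrightarrow> cls n r p = cls n r q \<longleftrightarrow> eqv n r p q"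
  unfolding cls_def eqv_def[symmetric] by (auto intro: eqv_trans eqv_sym)

lemma cls_eqI: "p \<in> FA n \<Longrightarrow> q \<in> FA n \<Longrightarrow> eqv n r p q \<Longrightarrow> cls n r p = cls n r q"
  by (simp add: cls_eq_iff)

lemma Tadd_cls: "p \<in> FA n \<Longrightarrow> q \<in> FA n \<Longrightarrow> Tadd n r (cls n r p) (cls n r q) = cls n r (p + q)"
  unfolding Tadd_def using rep_cls[of p n r] rep_cls[of q n r]
  by (intro cls_eqI) (auto intro: eqv_add)

lemma Tmul_cls: "p \<in> FA n \<Longrightarrow> q \<in> FA n \<Longrightarrow> Tmul n r (cls n r p) (cls n r q) = cls n r (p * q)"
  unfolding Tmul_def fmul_eq using rep_cls[of p n r] rep_cls[of q n r]
  by (intro cls_eqI) (auto intro: eqv_mult)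

lemma Tsmul_cls: "p \<in> FA n \<Longrightarrow> Tsmul n r c (cls n r p) = cls n r (scal c * p)"
  unfolding Tsmul_def fsc_eq using rep_cls[of p n r] by (intro cls_eqI) (auto intro: eqv_scal_mult)

lemma Tone_cls: "Tone n r = cls n r 1"
  by (simp add: Tone_def fone_eq)

lemma Tgen_cls: "Tgen n r g = cls n r (mon [g] 1)"
  by (simp add: Tgen_def fgen_eq)

lemma Tcar_iff: "A \<in> Tcar n r \<longleftrightarrow> (\<exists>p\<in>FA n. A = cls n r p)"
  by (auto simp: Tcar_def)

lemma cls_Tcar[simp]: "p \<in> FA n \<Longrightarrow> cls n r p \<in> Tcar n r"
  by (auto simp: Tcar_def)

lemma adj_iff: "adj n i j \<longleftrightarrow> j = Suc i mod n \<or> i = Suc j mod n"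
  by (simp add: adj_def)

lemma Rels_cases[consumes 1, case_names K_comm K_Kinv Kinv_K K_E K_F E_F_same E_F_diff
    E_comm F_comm E_serre F_serre K_prod K_poly]:
  assumes "p \<in> Rels n r"
  obtains (K_comm) i j where "i < n" "j < n" "p = fK i * fK j - fK j * fK i"
  | (K_Kinv) i where "i < n" "p = fK i * fKi i - 1"
  | (Kinv_K) i where "i < n" "p = fKi i * fK i - 1"
  | (K_E) i j where "i < n" "j < n" "p = fK i * fE j - scal (vv powi epsp n i j) * (fE j * fK i)"
  | (K_F) i j where "i < n" "j < n" "p = fK i * fF j - scal (vv powi - epsp n i j) * (fF j * fK i)"
  | (E_F_same) i where "i < n" "p = fE i * fF i - fF i * fE i
      - scal (1 / (vv - 1 / vv)) * (fK i * fKi ((i + 1) mod n) - fKi i * fK ((i + 1) mod n))"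
  | (E_F_diff) i j where "i < n" "j < n" "i \<noteq> j" "p = fE i * fF j - fF j * fE i"
  | (E_comm) i j where "i < n" "j < n" "\<not> adj n i j" "p = fE i * fE j - fE j * fE i"
  | (F_comm) i j where "i < n" "j < n" "\<not> adj n i j" "p = fF i * fF j - fF j * fF i"
  | (E_serre) i j where "i < n" "j < n" "adj n i j"
      "p = prod_list [fE i, fE i, fE j] - scal (vv + 1 / vv) * prod_list [fE i, fE j, fE i]
        + prod_list [fE j, fE i, fE i]"
  | (F_serre) i j where "i < n" "j < n" "adj n i j"
      "p = prod_list [fF i, fF i, fF j] - scal (vv + 1 / vv) * prod_list [fF i, fF j, fF i]
        + prod_list [fF j, fF i, fF i]"
  | (K_prod) "p = prod_list (map fK [0..<n]) - scal (vv ^ r)"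
  | (K_poly) i where "i < n" "p = prod_list (map (\<lambda>j. fK i - scal (vv ^ j)) [0..<r + 1])"
proof -
  have E_F: thesis if "i < n" "j < n" "p = fE i * fF j - fF j * fE i
      - (if i = j then scal (1 / (vv - 1 / vv))
           * (fK i * fKi ((i + 1) mod n) - fKi i * fK ((i + 1) mod n)) else 0)" for i j
    using that E_F_same[of i] E_F_diff[of i j] by (cases "i = j") simp_all
  from assms show thesis unfolding Rels_def fmul_eq fsc_eq fprod_eq fone_eq mult_1_right
    by (elim UnE CollectE exE conjE insertE emptyE)
      (rule K_comm K_Kinv Kinv_K K_E K_F E_F E_comm F_comm E_serre F_serre K_prod K_poly;
        assumption)+
qed

lemma Id_rels_ij:
  assumes "i < n" "j < n"
  shows K_comm_Id: "fK i * fK j - fK j * fK i \<in> Id n r"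
    and K_E_Id: "fK i * fE j - scal (vv powi epsp n i j) * (fE j * fK i) \<in> Id n r"
    and K_F_Id: "fK i * fF j - scal (vv powi - epsp n i j) * (fF j * fK i) \<in> Id n r"
    and E_F_Id: "fE i * fF j - fF j * fE i - (if i = j then scal (1 / (vv - 1 / vv))
      * (fK i * fKi ((i + 1) mod n) - fKi i * fK ((i + 1) mod n)) else 0) \<in> Id n r"
    and E_comm_Id: "\<not> adj n i j \<Longrightarrow> fE i * fE j - fE j * fE i \<in> Id n r"
    and F_comm_Id: "\<not> adj n i j \<Longrightarrow> fF i * fF j - fF j * fF i \<in> Id n r"
    and E_serre_Id: "adj n i j \<Longrightarrow> prod_list [fE i, fE i, fE j]
      - scal (vv + 1 / vv) * prod_list [fE i, fE j, fE i] + prod_list [fE j, fE i, fE i] \<in> Id n r"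
    and F_serre_Id: "adj n i j \<Longrightarrow> prod_list [fF i, fF i, fF j]
      - scal (vv + 1 / vv) * prod_list [fF i, fF j, fF i] + prod_list [fF j, fF i, fF i] \<in> Id n r"
  using assms by (intro impI Id.rel, unfold Rels_def fmul_eq fsc_eq fprod_eq, blast)+

lemma Id_rels_i:
  assumes "i < n"
  shows K_Kinv_Id: "fK i * fKi i - 1 \<in> Id n r"
    and Kinv_K_Id: "fKi i * fK i - 1 \<in> Id n r"
    and K_poly_Id: "prod_list (map (\<lambda>j. fK i - scal (vv ^ j)) [0..<r + 1]) \<in> Id n r"
  using assms
  by (intro Id.rel, unfold Rels_def fmul_eq fsc_eq fprod_eq fone_eq mult_1_right, blast)+

lemma K_prod_Id: "prod_list (map fK [0..<n]) - scal (vv ^ r) \<in> Id n r"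
  by (intro Id.rel, unfold Rels_def fmul_eq fsc_eq fprod_eq fone_eq mult_1_right, blast)

section \<open>The Cartan part commutes modulo the ideal\<close>

definition cartan_gen :: "nat \<Rightarrow> gen \<Rightarrow> bool" where
  "cartan_gen n g \<longleftrightarrow> (\<exists>i<n. g = GK i \<or> g = GKi i)"

definition cartan :: "nat \<Rightarrow> fa \<Rightarrow> bool" where
  "cartan n p \<longleftrightarrow> (\<forall>w\<in>supp p. \<forall>g\<in>set w. cartan_gen n g)"

lemma cartan_FA: "cartan n p \<Longrightarrow> p \<in> FA n"
  by (fastforce simp: cartan_def cartan_gen_def FA_iff word_below_def)

lemma cartan_mon[simp]: "cartan n (mon w c) \<longleftrightarrow> c = 0 \<or> (\<forall>g\<in>set w. cartan_gen n g)"
  by (simp add: cartan_def)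

lemma cartan_0[simp]: "cartan n 0" and cartan_1[simp]: "cartan n 1"
  and cartan_scal[simp]: "cartan n (scal c)"
  by (simp_all add: cartan_def one_eq_scal)

lemma cartan_fK[simp]: "i < n \<Longrightarrow> cartan n (fK i)" and cartan_fKi[simp]: "i < n \<Longrightarrow> cartan n (fKi i)"
  by (auto simp: fgen_eq cartan_gen_def)

lemma cartan_add[simp]: "cartan n p \<Longrightarrow> cartan n q \<Longrightarrow> cartan n (p + q)"
  using keys_add[of p q] by (auto simp: cartan_def)

lemma cartan_uminus[simp]: "cartan n p \<Longrightarrow> cartan n (- p)"
  by (simp add: cartan_def keys_minus)

lemma cartan_diff[simp]: "cartan n p \<Longrightarrow> cartan n q \<Longrightarrow> cartan n (p - q)"
  by (metis cartan_add cartan_uminus diff_conv_add_uminus)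

lemma cartan_mult[simp]: "cartan n p \<Longrightarrow> cartan n q \<Longrightarrow> cartan n (p * q)"
  using keys_mult[of p q] by (fastforce simp: cartan_def plus_list_def)

lemma cartan_prod_list[simp]: "\<forall>p\<in>set ps. cartan n p \<Longrightarrow> cartan n (prod_list ps)"
  by (induct ps) auto

lemma eqv_commute_inverse:
  assumes "eqv n r (y * z) 1" "eqv n r (z * y) 1" "eqv n r (x * y) (y * x)"
    and "x \<in> FA n" "y \<in> FA n" "z \<in> FA n"
  shows "eqv n r (x * z) (z * x)"
proof -
  have "eqv n r (x * z) (z * y * (x * z))"
    using eqv_mult_context[OF eqv_sym[OF assms(2)], of 1 "x * z"] assms by simp
  also have "eqv n r (z * y * (x * z)) (z * (x * y) * z)"
    using eqv_mult_context[OF eqv_sym[OF assms(3)], of z z] assms by (simp add: mult.assoc)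
  also have "eqv n r (z * (x * y) * z) (z * x * 1)"
    using eqv_mult_context[OF assms(1), of "z * x" 1] assms by (simp add: mult.assoc)
  finally show ?thesis by simp
qed

lemma eqv_cartan_gens_commute:
  assumes "cartan_gen n a" "cartan_gen n b"
  shows "eqv n r (fgen a * fgen b) (fgen b * fgen a)"
proof -
  have inv: "eqv n r (fK j * fKi j) 1" "eqv n r (fKi j * fK j) 1" if "j < n" for j
    using K_Kinv_Id[OF that] Kinv_K_Id[OF that] by (simp_all add: eqv_def)
  have KK: "eqv n r (fK i * fK j) (fK j * fK i)" if "i < n" "j < n" for i j
    using K_comm_Id[OF that] by (simp add: eqv_def)
  have KKi: "eqv n r (fK i * fKi j) (fKi j * fK i)" if "i < n" "j < n" for i j
    using that by (intro eqv_commute_inverse[OF inv[of j] KK[of i j]]) simp_all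
  have KiKi: "eqv n r (fKi i * fKi j) (fKi j * fKi i)" if "i < n" "j < n" for i j
    using that by (intro eqv_commute_inverse[OF inv[of j] eqv_sym[OF KKi[of j i]]]) simp_all
  from assms obtain i j where ij: "i < n" "j < n"
    and "a = GK i \<or> a = GKi i" "b = GK j \<or> b = GKi j"
    unfolding cartan_gen_def by blast
  then show ?thesis
    using KK[OF ij] KKi[OF ij] KiKi[OF ij] eqv_sym[OF KKi[OF ij(2,1)]] by auto
qed

lemma eqv_commute_cartan:
  assumes gens: "\<And>g. cartan_gen n g \<Longrightarrow> eqv n r (x * fgen g) (fgen g * x)"
    and "x \<in> FA n" "cartan n q"
  shows "eqv n r (x * q) (q * x)"
proof (induct q rule: fa_induct)
  case (mon w c)
  have "eqv n r (x * mon w c) (mon w c * x)" if "\<forall>g\<in>set w. cartan_gen n g" for w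
    using that
  proof (induct w)
    case (Cons g w)
    have FA_w: "mon w c \<in> FA n" and FA_g: "fgen g \<in> FA n"
      using Cons(2) cartan_FA[of n "mon w c"] cartan_FA[of n "fgen g"] by (auto simp: fgen_eq)
    have cons: "mon (g # w) c = fgen g * mon w c"
      by (simp add: fgen_eq mon_mult)
    have "eqv n r (x * fgen g * mon w c) (fgen g * x * mon w c)"
      using eqv_mult_context[OF gens FA_1 FA_w] Cons(2) by simp
    also have "eqv n r (fgen g * x * mon w c) (fgen g * mon w c * x)"
      using eqv_mult_context[OF Cons(1) FA_g FA_1] Cons(2) by (simp add: mult.assoc)
    finally show ?case
      unfolding cons by (simp add: mult.assoc)
  qed (simp add: scal_commute)
  then show ?case
    using mon assms(3) by (simp add: cartan_def)
qed (auto simp: distrib_left distrib_right intro: eqv_add)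

lemma eqv_cartan_commute:
  assumes "cartan n p" "cartan n q"
  shows "eqv n r (p * q) (q * p)"
proof -
  have "eqv n r (q * fgen g) (fgen g * q)" if "cartan_gen n g" for g
  proof (rule eqv_sym, rule eqv_commute_cartan[OF eqv_cartan_gens_commute])
    show "fgen g \<in> FA n" using that by (auto simp: cartan_gen_def)
  qed (use that assms(2) in auto)
  then have "eqv n r (q * p) (p * q)"
    using assms by (intro eqv_commute_cartan[of n r q p] cartan_FA)
  then show ?thesis by (rule eqv_sym)
qed

lemma eqv_cartan_prod_list_rev:
  "\<forall>p\<in>set ps. cartan n p \<Longrightarrow> eqv n r (prod_list (rev ps)) (prod_list ps)"
proof (induct ps)
  case (Cons p ps)
  have "eqv n r (prod_list (rev ps) * p) (prod_list ps * p)"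
    using Cons by (intro eqv_mult[of n r _ _ p p]) (auto intro: cartan_FA)
  also have "eqv n r (prod_list ps * p) (p * prod_list ps)"
    using Cons by (intro eqv_cartan_commute) auto
  finally show ?case by simp
qed simp

lemma scal_swap: "c * d = 1 \<Longrightarrow> b - scal c * a = scal (- c) * (a - scal d * b)"
  by (simp add: algebra_simps scal_mult single_uminus flip: mult.assoc) (simp flip: one_eq_scal)

lemma map_words_scal_mult:
  assumes "f [] = []"
  shows "map_words f (scal c * p) = scal c * map_words f p"
  by (induct p rule: fa_induct) (auto simp: mon_mult assms distrib_left)

lemma map_words_FA:
  assumes "\<And>w. word_below n w \<Longrightarrow> word_below n (f w)" "p \<in> FA n"
  shows "map_words f p \<in> FA n"
  using supp_map_words[of f p] assms by (auto simp: FA_iff)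

lemma map_words_Id:
  assumes word_below: "\<And>w. word_below n w \<Longrightarrow> word_below n (f w)"
    and hom: "(\<forall>u w. f (u @ w) = f u @ f w) \<or> (\<forall>u w. f (u @ w) = f w @ f u)"
    and rels: "\<And>p. p \<in> Rels n r \<Longrightarrow> map_words f p \<in> Id n r"
    and "p \<in> Id n r"
  shows "map_words f p \<in> Id n r"
  using assms(4)
proof induct
  case (smul p c)
  have "f [] = []" using hom by (metis append_Nil2 append_self_conv2)
  then show ?case
    using Id_scal_mult[OF smul(2)] by (simp add: fsc_eq map_words_scal_mult)
next
  case (mul p a b)
  have FA: "map_words f a \<in> FA n" "map_words f b \<in> FA n"
    using mul(3,4) by (auto intro: map_words_FA word_below)
  from hom show ?case
  proof
    assume "\<forall>u w. f (u @ w) = f u @ f w"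
    then show ?thesis
      using Id_mult[OF mul(2) FA] by (simp add: fmul_eq map_words_mult mult.assoc)
  next
    assume "\<forall>u w. f (u @ w) = f w @ f u"
    then show ?thesis
      using Id_mult[OF mul(2) FA(2,1)] by (simp add: fmul_eq map_words_mult_anti mult.assoc)
  qed
qed (auto intro: rels Id.intros)

fun reindex :: "(nat \<Rightarrow> nat) \<Rightarrow> gen \<Rightarrow> gen" where
  "reindex f (GE i) = GE (f i)" | "reindex f (GF i) = GF (f i)"
| "reindex f (GK i) = GK (f i)" | "reindex f (GKi i) = GKi (f i)"

fun swap_gen :: "gen \<Rightarrow> gen" where
  "swap_gen (GE i) = GF i" | "swap_gen (GF i) = GE i"
| "swap_gen (GK i) = GK i" | "swap_gen (GKi i) = GKi i"

lemma gidx_reindex[simp]: "gidx (reindex f g) = f (gidx g)"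
  by (cases g) auto

lemma gidx_swap_gen[simp]: "gidx (swap_gen g) = gidx g"
  by (cases g) auto

lemma reindex_id_on: "f (gidx g) = gidx g \<Longrightarrow> reindex f g = g"
  by (cases g) auto

lemma reindex_reindex[simp]: "reindex f (reindex g x) = reindex (f \<circ> g) x"
  by (cases x) auto

lemma swap_gen_swap_gen[simp]: "swap_gen (swap_gen g) = g"
  by (cases g) auto

definition nu_word :: "nat \<Rightarrow> gen list \<Rightarrow> gen list" where
  "nu_word n w = map (reindex (\<lambda>i. (i + 1) mod n)) w"

definition sigma_word :: "gen list \<Rightarrow> gen list" where
  "sigma_word w = rev (map swap_gen w)"

abbreviation nu_fa :: "nat \<Rightarrow> fa \<Rightarrow> fa" where "nu_fa n \<equiv> map_words (nu_word n)"
abbreviation sigma_fa :: "fa \<Rightarrow> fa" where "sigma_fa \<equiv> map_words sigma_word"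

lemma nu_fa_mult[simp]: "nu_fa n (p * q) = nu_fa n p * nu_fa n q"
  by (rule map_words_mult) (simp add: nu_word_def)

lemma sigma_fa_mult[simp]: "sigma_fa (p * q) = sigma_fa q * sigma_fa p"
  by (rule map_words_mult_anti) (simp add: sigma_word_def)

lemma nu_word_Nil[simp]: "nu_word n [] = []" and sigma_word_Nil[simp]: "sigma_word [] = []"
  by (simp_all add: nu_word_def sigma_word_def)

lemma nu_fa_1[simp]: "nu_fa n 1 = 1" and sigma_fa_1[simp]: "sigma_fa 1 = 1"
  by (simp_all add: one_eq_scal)

lemma nu_fa_fgen[simp]: "nu_fa n (fgen g) = fgen (reindex (\<lambda>i. Suc i mod n) g)"
  and sigma_fa_fgen[simp]: "sigma_fa (fgen g) = fgen (swap_gen g)"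
  by (simp_all add: fgen_eq nu_word_def sigma_word_def)

lemma nu_fa_prod_list: "nu_fa n (prod_list ps) = prod_list (map (nu_fa n) ps)"
  by (induct ps) auto

lemma sigma_fa_prod_list: "sigma_fa (prod_list ps) = prod_list (rev (map sigma_fa ps))"
  by (induct ps) auto

lemma word_below_nu_word: "0 < n \<Longrightarrow> word_below n (nu_word n w)"
  by (simp add: word_below_def nu_word_def)

lemma word_below_sigma_word: "word_below n w \<Longrightarrow> word_below n (sigma_word w)"
  by (simp add: word_below_def sigma_word_def)

lemma mon_eq_prod_list: "mon w c = scal c * prod_list (map fgen w)"
proof (induct w arbitrary: c)
  case (Cons g w)
  have "mon (g # w) c = scal c * (fgen g * mon w 1)" by (simp add: fgen_eq mon_mult)
  moreover have "prod_list (map fgen w) = mon w 1" using Cons[of 1] by (simp flip: one_eq_scal)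
  ultimately show ?case by simp
qed simp

lemma sigma_fa_cartan:
  assumes "cartan n p"
  shows "eqv n r (sigma_fa p) p"
proof (induct p rule: fa_induct)
  case (mon w c)
  then have w: "\<forall>g\<in>set w. cartan_gen n g" using assms by (simp add: cartan_def)
  then have "sigma_word w = rev w" by (induct w) (auto simp: sigma_word_def cartan_gen_def)
  moreover have "eqv n r (prod_list (rev (map fgen w))) (prod_list (map fgen w))"
    using w by (intro eqv_cartan_prod_list_rev) (auto simp: fgen_eq cartan_gen_def)
  ultimately have
    "eqv n r (scal c * prod_list (map fgen (rev w))) (scal c * prod_list (map fgen w))"
    by (simp add: rev_map eqv_scal_mult)
  then show ?case
    using \<open>sigma_word w = rev w\<close> by (simp only: map_words_mon mon_eq_prod_list[symmetric])
qed (auto intro: eqv_add)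

lemma Suc_mod_eq_iff[simp]: "i < n \<Longrightarrow> j < n \<Longrightarrow> Suc i mod n = Suc j mod n \<longleftrightarrow> i = j"
  by (auto simp: mod_Suc split: if_splits)

lemma epsp_iff: "i < n \<Longrightarrow> j < n \<Longrightarrow>
    epsp n i j = (if j = i then 1 else if i = Suc j mod n then - 1 else 0)"
  unfolding epsp_def by (cases i) (auto simp: mod_Suc mod_if split: if_splits)

lemma epsp_Suc_mod[simp]: "i < n \<Longrightarrow> j < n \<Longrightarrow> epsp n (Suc i mod n) (Suc j mod n) = epsp n i j"
  by (simp add: epsp_iff)

lemma adj_Suc_mod[simp]: "i < n \<Longrightarrow> j < n \<Longrightarrow> adj n (Suc i mod n) (Suc j mod n) \<longleftrightarrow> adj n i j"
  by (simp add: adj_iff)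

lemma adj_commute: "adj n i j \<longleftrightarrow> adj n j i"
  by (auto simp: adj_def)

lemma map_Suc_mod_upt: "0 < n \<Longrightarrow> map (\<lambda>i. f (Suc i mod n)) [0..<n] = map f [1..<n] @ [f 0]"
proof -
  assume "0 < n"
  then obtain k where n: "n = Suc k" by (cases n) auto
  have "map (\<lambda>i. f (Suc i mod n)) [0..<k] = map f (map Suc [0..<k])"
    by (simp add: n)
  then show ?thesis by (simp only: n map_Suc_upt) simp
qed

lemma nu_fa_Rels:
  assumes "0 < n" "p \<in> Rels n r"
  shows "nu_fa n p \<in> Id n r"
  using assms(2)
proof (cases rule: Rels_cases)
  case (K_comm i j)
  then show ?thesis using K_comm_Id[of "Suc i mod n" n "Suc j mod n"] by simp
next
  case (K_Kinv i)
  then show ?thesis using K_Kinv_Id[of "Suc i mod n" n] by simp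
next
  case (Kinv_K i)
  then show ?thesis using Kinv_K_Id[of "Suc i mod n" n] by simp
next
  case (K_E i j)
  then show ?thesis using K_E_Id[of "Suc i mod n" n "Suc j mod n"] by simp
next
  case (K_F i j)
  then show ?thesis using K_F_Id[of "Suc i mod n" n "Suc j mod n"] by simp
next
  case (E_F_same i)
  then show ?thesis using E_F_Id[of "Suc i mod n" n "Suc i mod n"] by simp
next
  case (E_F_diff i j)
  then show ?thesis using E_F_Id[of "Suc i mod n" n "Suc j mod n"] by simp
next
  case (E_comm i j)
  then show ?thesis using E_comm_Id[of "Suc i mod n" n "Suc j mod n"] by simp
next
  case (F_comm i j)
  then show ?thesis using F_comm_Id[of "Suc i mod n" n "Suc j mod n"] by simp
next
  case (E_serre i j)
  then show ?thesis using E_serre_Id[of "Suc i mod n" n "Suc j mod n"] by simp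
next
  case (F_serre i j)
  then show ?thesis using F_serre_Id[of "Suc i mod n" n "Suc j mod n"] by simp
next
  case K_prod
  have rotate: "nu_fa n p = prod_list (map fK [1..<n]) * fK 0 - scal (vv ^ r)"
    using map_Suc_mod_upt[OF assms(1), of fK] by (simp add: K_prod nu_fa_prod_list o_def)
  have "eqv n r (prod_list (map fK [1..<n]) * fK 0) (fK 0 * prod_list (map fK [1..<n]))"
    using assms(1) by (intro eqv_cartan_commute cartan_prod_list) auto
  also have "fK 0 * prod_list (map fK [1..<n]) = prod_list (map fK [0..<n])"
    using assms(1) by (simp add: upt_conv_Cons)
  finally have "eqv n r (nu_fa n p) (prod_list (map fK [0..<n]) - scal (vv ^ r))"
    unfolding rotate by (rule eqv_diff) simp
  then show ?thesis using K_prod_Id by (rule Id_eqv)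
next
  case (K_poly i)
  then show ?thesis using K_poly_Id[of "Suc i mod n" n] by (simp add: nu_fa_prod_list o_def)
qed

lemma sigma_fa_Rels:
  assumes "p \<in> Rels n r"
  shows "sigma_fa p \<in> Id n r"
proof -
  have cartan_rel: ?thesis if "cartan n p"
    using sigma_fa_cartan[OF that] Id.rel[OF assms] by (rule Id_eqv)
  from assms show ?thesis
  proof (cases rule: Rels_cases)
    case (K_E i j)
    have "sigma_fa p = fF j * fK i - scal (vv powi epsp n i j) * (fK i * fF j)"
      using K_E by (simp add: scal_commute)
    also have "\<dots> = scal (- (vv powi epsp n i j))
        * (fK i * fF j - scal (vv powi - epsp n i j) * (fF j * fK i))"
      using vv_neq_0 by (intro scal_swap) (simp add: power_int_minus)
    finally show ?thesis using Id_scal_mult[OF K_F_Id] K_E by simp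
  next
    case (K_F i j)
    have "sigma_fa p = fE j * fK i - scal (vv powi - epsp n i j) * (fK i * fE j)"
      using K_F by (simp add: scal_commute)
    also have "\<dots> = scal (- (vv powi - epsp n i j))
        * (fK i * fE j - scal (vv powi epsp n i j) * (fE j * fK i))"
      using vv_neq_0 by (intro scal_swap) (simp add: power_int_minus)
    finally show ?thesis using Id_scal_mult[OF K_E_Id] K_F by simp
  next
    case (E_F_same i)
    let ?k = "fK i * fKi ((i + 1) mod n) - fKi i * fK ((i + 1) mod n)"
    have "sigma_fa p = fE i * fF i - fF i * fE i - scal (1 / (vv - 1 / vv)) * sigma_fa ?k"
      using E_F_same by (simp add: scal_commute)
    moreover have "eqv n r (sigma_fa ?k) ?k"
      using E_F_same by (intro sigma_fa_cartan) simp
    ultimately have "eqv n r (sigma_fa p) p"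
      unfolding E_F_same by (simp only:) (rule eqv_diff[OF eqv_refl eqv_scal_mult])
    then show ?thesis using Id.rel[OF assms] by (rule Id_eqv)
  next
    case (E_F_diff i j)
    then show ?thesis using E_F_Id[of j n i] by simp
  next
    case (E_comm i j)
    then show ?thesis using F_comm_Id[of j n i] by (simp add: adj_commute)
  next
    case (F_comm i j)
    then show ?thesis using E_comm_Id[of j n i] by (simp add: adj_commute)
  next
    case (E_serre i j)
    have "sigma_fa p = prod_list [fF i, fF i, fF j]
        - scal (vv + 1 / vv) * prod_list [fF i, fF j, fF i] + prod_list [fF j, fF i, fF i]"
      unfolding E_serre(4) by (simp add: scal_commute mult.assoc algebra_simps)
    then show ?thesis using F_serre_Id E_serre by simp
  next
    case (F_serre i j)
    have "sigma_fa p = prod_list [fE i, fE i, fE j]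
        - scal (vv + 1 / vv) * prod_list [fE i, fE j, fE i] + prod_list [fE j, fE i, fE i]"
      unfolding F_serre(4) by (simp add: scal_commute mult.assoc algebra_simps)
    then show ?thesis using E_serre_Id F_serre by simp
  qed (rule cartan_rel; auto simp del: upt_Suc)+
qed

section \<open>A representation separating the K_i\<close>

text \<open>T acts on the space with basis the r-element subsets S of {0..n-1}: E_i moves i+1 to i,
  F_i moves i to i+1 (both act by zero if this is impossible), and K_i multiplies by v when i
  belongs to S. A generator sends a basis vector to a multiple of a basis vector, recorded as a
  pair; words act from the right end.\<close>

fun gen_act :: "nat \<Rightarrow> gen \<Rightarrow> nat set \<Rightarrow> nat set \<times> qv" where
  "gen_act n (GE i) S =
     (if (i + 1) mod n \<in> S \<and> i \<notin> S then (insert i (S - {(i + 1) mod n}), 1) else (S, 0))"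
| "gen_act n (GF i) S =
     (if i \<in> S \<and> (i + 1) mod n \<notin> S then (insert ((i + 1) mod n) (S - {i}), 1) else (S, 0))"
| "gen_act n (GK i) S = (S, if i \<in> S then vv else 1)"
| "gen_act n (GKi i) S = (S, if i \<in> S then 1 / vv else 1)"

fun word_act :: "nat \<Rightarrow> gen list \<Rightarrow> nat set \<Rightarrow> nat set \<times> qv" where
  "word_act n [] S = (S, 1)"
| "word_act n (g # w) S =
     (fst (gen_act n g (fst (word_act n w S))),
      snd (gen_act n g (fst (word_act n w S))) * snd (word_act n w S))"

lemma word_act_append:
  "word_act n (u @ w) S =
     (fst (word_act n u (fst (word_act n w S))),
      snd (word_act n u (fst (word_act n w S))) * snd (word_act n w S))"
  by (induct u) auto

definition rsubsets :: "nat \<Rightarrow> nat \<Rightarrow> nat set set" where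
  "rsubsets n r = {S. S \<subseteq> {..<n} \<and> card S = r}"

lemma gen_act_rsubsets:
  assumes "gidx g < n" "S \<in> rsubsets n r"
  shows "fst (gen_act n g S) \<in> rsubsets n r"
proof -
  have S: "S \<subseteq> {..<n}" "card S = r" using assms(2) by (auto simp: rsubsets_def)
  have move: "insert a (S - {b}) \<in> rsubsets n r" if "a < n" "a \<notin> S" "b \<in> S" for a b
  proof -
    have "finite S" using S(1) finite_subset by blast
    then have "card (insert a (S - {b})) = card S"
      using that by (simp add: card_Diff_singleton) (metis Suc_pred card_gt_0_iff empty_iff)
    then show ?thesis using that S by (auto simp: rsubsets_def)
  qed
  show ?thesis
    using assms(1) by (cases g) (simp_all add: move assms(2))
qed

lemma word_act_rsubsets: "word_below n w \<Longrightarrow> S \<in> rsubsets n r \<Longrightarrow> fst (word_act n w S) \<in> rsubsets n r"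
  by (induct w) (auto intro: gen_act_rsubsets)

text \<open>\<open>act_eval n S h p\<close> is the value of the functional h (given on the basis) at the image of
  the basis vector S under p; p acts by zero iff this vanishes for all S and h.\<close>

definition act_eval :: "nat \<Rightarrow> nat set \<Rightarrow> (nat set \<Rightarrow> qv) \<Rightarrow> fa \<Rightarrow> qv" where
  "act_eval n S h p = lin_ext (\<lambda>w. snd (word_act n w S) * h (fst (word_act n w S))) p"

definition annihilates :: "nat \<Rightarrow> nat \<Rightarrow> fa \<Rightarrow> bool" where
  "annihilates n r p \<longleftrightarrow> (\<forall>S\<in>rsubsets n r. \<forall>h. act_eval n S h p = 0)"

lemma act_eval_zero[simp]: "act_eval n S h 0 = 0"
  and act_eval_add[simp]: "act_eval n S h (p + q) = act_eval n S h p + act_eval n S h q"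
  and act_eval_diff[simp]: "act_eval n S h (p - q) = act_eval n S h p - act_eval n S h q"
  and act_eval_scal_mult[simp]: "act_eval n S h (scal c * p) = c * act_eval n S h p"
  and act_eval_mon[simp]:
    "act_eval n S h (mon w c) = c * (snd (word_act n w S) * h (fst (word_act n w S)))"
  by (simp_all add: act_eval_def)

lemma act_eval_mon_mult:
  "act_eval n S h (mon u c * p)
     = c * act_eval n S (\<lambda>T. snd (word_act n u T) * h (fst (word_act n u T))) p"
  by (simp add: act_eval_def lin_ext_mon_mult word_act_append mult_ac)

lemma act_eval_mult_mon:
  "act_eval n S h (p * mon w c) = c * snd (word_act n w S) * act_eval n (fst (word_act n w S)) h p"
  by (simp add: act_eval_def lin_ext_mult_mon word_act_append lin_ext_cmult mult_ac)

lemma annihilates_mult: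
  assumes "annihilates n r p" "b \<in> FA n"
  shows "annihilates n r (a * p * b)"
  unfolding annihilates_def
proof (intro ballI allI)
  fix S h assume S: "S \<in> rsubsets n r"
  have "act_eval n S' h' (a * p) = 0" if "S' \<in> rsubsets n r" for S' h'
    by (induct a rule: fa_induct)
      (use assms(1) that in \<open>auto simp: act_eval_mon_mult annihilates_def distrib_right\<close>)
  then show "act_eval n S h (a * p * b) = 0"
  proof (induct b rule: fa_induct)
    case (mon w c)
    then have "word_below n w" using assms(2) by (auto simp: FA_iff)
    then show ?case using mon S word_act_rsubsets by (simp add: act_eval_mult_mon)
  qed (auto simp: distrib_left)
qed


lemmas act_eval_words = fgen_eq mon_mult one_eq_scal

lemma Suc_mod_neq: "2 \<le> n \<Longrightarrow> i < n \<Longrightarrow> Suc i mod n \<noteq> i"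
  by (cases "Suc i = n") auto

lemma Suc_Suc_mod_neq: "3 \<le> n \<Longrightarrow> i < n \<Longrightarrow> Suc (Suc i mod n) mod n \<noteq> i"
  by (cases "Suc i = n"; cases "Suc (Suc i) = n") (auto simp: mod_Suc)

lemma K_weight_after_E:
  assumes "i < n" "j < n" "Suc j mod n \<in> S" "j \<notin> S"
  shows "(if i \<in> insert j (S - {Suc j mod n}) then vv else 1)
    = vv powi epsp n i j * (if i \<in> S then vv else 1)"
proof -
  have ne: "Suc j mod n \<noteq> j" using assms(3,4) by auto
  then consider "i = j" | "i = Suc j mod n" | "i \<noteq> j" "i \<noteq> Suc j mod n" by blast
  then show ?thesis
    by cases (use assms ne vv_neq_0 in \<open>simp_all add: epsp_iff power_int_minus\<close>)
qed

lemma K_weight_after_F: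
  assumes "i < n" "j < n" "j \<in> S" "Suc j mod n \<notin> S"
  shows "(if i \<in> insert (Suc j mod n) (S - {j}) then vv else 1)
    = vv powi - epsp n i j * (if i \<in> S then vv else 1)"
proof -
  have ne: "Suc j mod n \<noteq> j" using assms(3,4) by auto
  then consider "i = j" | "i = Suc j mod n" | "i \<noteq> j" "i \<noteq> Suc j mod n" by blast
  then show ?thesis
    by cases (use assms ne vv_neq_0 in \<open>simp_all add: epsp_iff power_int_minus\<close>)
qed

lemma act_eval_K_E:
  "i < n \<Longrightarrow> j < n \<Longrightarrow> act_eval n S h (fK i * fE j - scal (vv powi epsp n i j) * (fE j * fK i)) = 0"
  using K_weight_after_E[of i n j S]
  by (cases "Suc j mod n \<in> S \<and> j \<notin> S") (auto simp: act_eval_words)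

lemma act_eval_K_F:
  "i < n \<Longrightarrow> j < n \<Longrightarrow> act_eval n S h (fK i * fF j - scal (vv powi - epsp n i j) * (fF j * fK i)) = 0"
  using K_weight_after_F[of i n j S]
  by (cases "j \<in> S \<and> Suc j mod n \<notin> S") (auto simp: act_eval_words)

lemma act_eval_E_F_same:
  assumes "2 \<le> n" "i < n"
  shows "act_eval n S h (fE i * fF i - fF i * fE i
      - scal (1 / (vv - 1 / vv)) * (fK i * fKi ((i + 1) mod n) - fKi i * fK ((i + 1) mod n))) = 0"
proof -
  have ne: "Suc i mod n \<noteq> i" "i \<noteq> Suc i mod n" using Suc_mod_neq[OF assms] by auto
  have vv: "vv \<noteq> 0" "vv - 1 / vv \<noteq> 0" using vv_neq_0 vv_neq_inverse by auto
  consider "i \<in> S" "Suc i mod n \<in> S" | "i \<in> S" "Suc i mod n \<notin> S"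
    | "i \<notin> S" "Suc i mod n \<in> S" | "i \<notin> S" "Suc i mod n \<notin> S" by blast
  then show ?thesis
  proof cases
    case 2
    then show ?thesis using ne vv
      by (simp add: act_eval_words insert_absorb) (simp add: field_simps)
  next
    case 3
    then show ?thesis using ne vv
      by (simp add: act_eval_words insert_absorb) (simp add: field_simps)
  qed (use ne vv in \<open>simp_all add: act_eval_words\<close>)
qed

lemma act_eval_E_F_diff:
  assumes "2 \<le> n" "i < n" "j < n" "i \<noteq> j"
  shows "act_eval n S h (fE i * fF j - fF j * fE i) = 0"
proof (cases "adj n i j")
  case True
  have "Suc i mod n \<noteq> i" "Suc j mod n \<noteq> j" using Suc_mod_neq assms by auto
  with True show ?thesis by (auto simp: act_eval_words adj_iff)
next
  case False
  then have "Suc i mod n \<noteq> Suc j mod n" "j \<noteq> Suc i mod n" "i \<noteq> Suc j mod n"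
    using assms by (auto simp: adj_iff)
  then show ?thesis using assms by (auto simp: act_eval_words intro!: arg_cong[where f = h])
qed

lemma act_eval_E_comm:
  assumes "i < n" "j < n" "\<not> adj n i j"
  shows "act_eval n S h (fE i * fE j - fE j * fE i) = 0"
proof (cases "i = j")
  case False
  then have "Suc i mod n \<noteq> Suc j mod n" "j \<noteq> Suc i mod n" "i \<noteq> Suc j mod n"
    using assms by (auto simp: adj_iff)
  then show ?thesis using False by (auto simp: act_eval_words intro!: arg_cong[where f = h])
qed simp

lemma act_eval_F_comm:
  assumes "i < n" "j < n" "\<not> adj n i j"
  shows "act_eval n S h (fF i * fF j - fF j * fF i) = 0"
proof (cases "i = j")
  case False
  then have "Suc i mod n \<noteq> Suc j mod n" "j \<noteq> Suc i mod n" "i \<noteq> Suc j mod n"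
    using assms by (auto simp: adj_iff)
  then show ?thesis using False by (auto simp: act_eval_words intro!: arg_cong[where f = h])
qed simp

lemma word_act_repeated_E: "snd (word_act n [GE i, GE i] S) = 0"
  and word_act_repeated_F: "snd (word_act n [GF i, GF i] S) = 0"
  by auto

lemma word_act_zero_factor:
  "(\<And>S. snd (word_act n u S) = 0) \<Longrightarrow> snd (word_act n (v @ u @ w) S) = 0"
  by (simp add: word_act_append)

lemma word_act_EEE:
  assumes "3 \<le> n" "i < n" "j < n" "adj n i j"
  shows "snd (word_act n [GE i, GE j, GE i] S) = 0"
  using assms(4) unfolding adj_iff
proof
  assume j: "j = Suc i mod n"
  have "Suc (Suc i mod n) mod n \<noteq> i" "Suc (Suc i mod n) mod n \<noteq> Suc i mod n"
    using Suc_Suc_mod_neq Suc_mod_neq assms(1,2) by auto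
  then show ?thesis unfolding j by auto
next
  assume i: "i = Suc j mod n"
  have "Suc (Suc j mod n) mod n \<noteq> j" "Suc j mod n \<noteq> j"
    using Suc_Suc_mod_neq Suc_mod_neq assms(1,3) by auto
  then show ?thesis unfolding i by auto
qed

lemma word_act_FFF:
  assumes "3 \<le> n" "i < n" "j < n" "adj n i j"
  shows "snd (word_act n [GF i, GF j, GF i] S) = 0"
  using assms(4) unfolding adj_iff
proof
  assume j: "j = Suc i mod n"
  have "Suc (Suc i mod n) mod n \<noteq> i" "Suc (Suc i mod n) mod n \<noteq> Suc i mod n"
    using Suc_Suc_mod_neq Suc_mod_neq assms(1,2) by auto
  then show ?thesis unfolding j by auto
next
  assume i: "i = Suc j mod n"
  have "Suc (Suc j mod n) mod n \<noteq> j" "Suc j mod n \<noteq> j"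
    using Suc_Suc_mod_neq Suc_mod_neq assms(1,3) by auto
  then show ?thesis unfolding i by auto
qed

lemma act_eval_E_serre:
  assumes "3 \<le> n" "i < n" "j < n" "adj n i j"
  shows "act_eval n S h (prod_list [fE i, fE i, fE j]
      - scal (vv + 1 / vv) * prod_list [fE i, fE j, fE i] + prod_list [fE j, fE i, fE i]) = 0"
proof -
  have "snd (word_act n ([] @ [GE i, GE i] @ [GE j]) S) = 0"
    "snd (word_act n ([GE j] @ [GE i, GE i] @ []) S) = 0"
    by (rule word_act_zero_factor, rule word_act_repeated_E)+
  then show ?thesis using word_act_EEE[OF assms]
    by (simp add: act_eval_words act_eval_def del: word_act.simps)
qed

lemma act_eval_F_serre:
  assumes "3 \<le> n" "i < n" "j < n" "adj n i j"
  shows "act_eval n S h (prod_list [fF i, fF i, fF j]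
      - scal (vv + 1 / vv) * prod_list [fF i, fF j, fF i] + prod_list [fF j, fF i, fF i]) = 0"
proof -
  have "snd (word_act n ([] @ [GF i, GF i] @ [GF j]) S) = 0"
    "snd (word_act n ([GF j] @ [GF i, GF i] @ []) S) = 0"
    by (rule word_act_zero_factor, rule word_act_repeated_F)+
  then show ?thesis using word_act_FFF[OF assms]
    by (simp add: act_eval_words act_eval_def del: word_act.simps)
qed

definition cartan_weight :: "nat \<Rightarrow> nat set \<Rightarrow> gen list \<Rightarrow> qv" where
  "cartan_weight n S w = prod_list (map (\<lambda>g. snd (gen_act n g S)) w)"

lemma word_act_cartan: "\<forall>g\<in>set w. cartan_gen n g \<Longrightarrow> word_act n w S = (S, cartan_weight n S w)"
  by (induct w) (auto simp: cartan_gen_def cartan_weight_def)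

lemma act_eval_cartan: "cartan n p \<Longrightarrow> act_eval n S h p = h S * lin_ext (cartan_weight n S) p"
  unfolding act_eval_def
  by (subst lin_ext_cong[where h = "\<lambda>w. h S * cartan_weight n S w"])
    (auto simp: cartan_def word_act_cartan mult.commute lin_ext_cmult)

lemma lin_ext_cartan_weight_prod_list:
  "lin_ext (cartan_weight n S) (prod_list ps) = prod_list (map (lin_ext (cartan_weight n S)) ps)"
  by (rule lin_ext_prod_list) (simp_all add: cartan_weight_def)

lemma lin_ext_cartan_weight_K: "lin_ext (cartan_weight n S) (fK i) = (if i \<in> S then vv else 1)"
  by (simp add: fgen_eq cartan_weight_def)

lemma act_eval_K_prod:
  assumes "S \<in> rsubsets n r"
  shows "act_eval n S h (prod_list (map fK [0..<n]) - scal (vv ^ r)) = 0"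
proof -
  have "lin_ext (cartan_weight n S) (prod_list (map fK [0..<n])) = (\<Prod>i<n. if i \<in> S then vv else 1)"
    by (simp add: lin_ext_cartan_weight_prod_list lin_ext_cartan_weight_K o_def
        prod.distinct_set_conv_list[symmetric] atLeast0LessThan)
  also have "\<dots> = vv ^ card ({..<n} \<inter> S)"
    by (simp add: prod.If_cases)
  also have "\<dots> = vv ^ r" using assms by (simp add: rsubsets_def Int_absorb1)
  moreover have "cartan n (prod_list (map fK [0..<n]))" by simp
  ultimately show ?thesis by (simp add: act_eval_cartan)
qed

lemma act_eval_K_poly:
  assumes "1 \<le> r" "i < n"
  shows "act_eval n S h (prod_list (map (\<lambda>j. fK i - scal (vv ^ j)) [0..<r + 1])) = 0"
proof -
  let ?ps = "map (\<lambda>j. fK i - scal (vv ^ j)) [0..<r + 1]"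
  let ?f = "\<lambda>j. (if i \<in> S then vv else 1) - vv ^ j"
  have "cartan n (prod_list ?ps)" using assms(2) by simp
  then have
    "act_eval n S h (prod_list ?ps) = h S * prod_list (map (lin_ext (cartan_weight n S)) ?ps)"
    by (simp add: act_eval_cartan lin_ext_cartan_weight_prod_list del: upt_Suc)
  also have "map (lin_ext (cartan_weight n S)) ?ps = map ?f [0..<r + 1]"
    by (simp add: lin_ext_cartan_weight_K cartan_weight_def del: upt_Suc)
  also have "prod_list (map ?f [0..<r + 1]) = 0"
  proof -
    have "(if i \<in> S then 1 else 0) \<in> set [0..<r + 1]" using assms(1) by auto
    then show ?thesis unfolding prod_list_zero_iff by (force simp del: upt_Suc)
  qed
  finally show ?thesis by simp
qed

lemma annihilates_Rels:
  assumes "3 \<le> n" "1 \<le> r" "p \<in> Rels n r"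
  shows "annihilates n r p"
  unfolding annihilates_def
proof (intro ballI allI)
  fix S h assume S: "S \<in> rsubsets n r"
  have n: "2 \<le> n" using assms(1) by simp
  from assms(3) show "act_eval n S h p = 0"
  proof (cases rule: Rels_cases)
    case (K_E i j) then show ?thesis using act_eval_K_E[of i n j S h] by simp
  next
    case (K_F i j) then show ?thesis using act_eval_K_F[of i n j S h] by simp
  next
    case (E_F_same i) then show ?thesis using act_eval_E_F_same[OF n, of i S h] by simp
  next
    case (E_F_diff i j) then show ?thesis using act_eval_E_F_diff[OF n, of i j S h] by simp
  next
    case (E_comm i j) then show ?thesis using act_eval_E_comm[of i n j S h] by simp
  next
    case (F_comm i j) then show ?thesis using act_eval_F_comm[of i n j S h] by simp
  next
    case (E_serre i j) then show ?thesis using act_eval_E_serre[OF assms(1), of i j S h] by simp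
  next
    case (F_serre i j) then show ?thesis using act_eval_F_serre[OF assms(1), of i j S h] by simp
  next
    case K_prod then show ?thesis using act_eval_K_prod[OF S, of h] by simp
  next
    case (K_poly i) then show ?thesis using act_eval_K_poly[OF assms(2), of i n S h] by simp
  qed (use vv_neq_0 in \<open>simp_all add: act_eval_words\<close>)
qed

lemma annihilates_Id:
  assumes "3 \<le> n" "1 \<le> r" "p \<in> Id n r"
  shows "annihilates n r p"
  using assms(3)
proof induct
  case (rel p) then show ?case using annihilates_Rels assms(1,2) by blast
next
  case (smul p c) then show ?case by (simp add: annihilates_def fsc_eq)
next
  case (mul p a b)
  then show ?case using annihilates_mult[of n r p b a] by (simp add: fmul_eq mult.assoc)
qed (simp_all add: annihilates_def)

lemma K_neq_mod_Id:
  assumes "3 \<le> n" "1 \<le> r" "r < n" "m < n" "m \<noteq> 0"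
  shows "fK 0 - fK m \<notin> Id n r"
proof
  assume "fK 0 - fK m \<in> Id n r"
  then have ann: "annihilates n r (fK 0 - fK m)" using annihilates_Id assms(1,2) by blast
  have "r - 1 \<le> card ({..<n} - {0, m})" using assms by (simp add: card_Diff_subset)
  then obtain A where A: "A \<subseteq> {..<n} - {0, m}" "card A = r - 1"
    by (meson obtain_subset_with_card_n)
  have "finite A" "0 \<notin> A" using A(1) finite_subset by auto
  then have S: "insert 0 A \<in> rsubsets n r" using A assms by (auto simp: rsubsets_def)
  have "act_eval n (insert 0 A) (\<lambda>_. 1) (fK 0 - fK m) = vv - 1"
    using A assms(5) by (auto simp: act_eval_words)
  then show False using ann S vv_neq_1 by (auto simp: annihilates_def)
qed

lemma bij_betw_periodic:
  assumes "f ` A \<subseteq> A" "\<And>x. x \<in> A \<Longrightarrow> (f ^^ Suc k) x = x"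
  shows "bij_betw f A A"
proof (rule bij_betw_byWitness[where f' = "f ^^ k"])
  have "(f ^^ j) ` A \<subseteq> A" for j by (induct j) (use assms(1) in auto)
  then show "(f ^^ k) ` A \<subseteq> A" .
  show "\<forall>a\<in>A. (f ^^ k) (f a) = a"
    using assms(2) by (simp add: funpow_Suc_right del: funpow.simps(2))
  show "\<forall>a\<in>A. f ((f ^^ k) a) = a"
    using assms(2) by simp
qed (use assms(1) in auto)

definition T_map :: "nat \<Rightarrow> nat \<Rightarrow> (gen list \<Rightarrow> gen list) \<Rightarrow> fa set \<Rightarrow> fa set" where
  "T_map n r f A = cls n r (map_words f (rep A))"

context
  fixes n r :: nat and f :: "gen list \<Rightarrow> gen list"
  assumes word_below_f: "\<And>w. word_below n w \<Longrightarrow> word_below n (f w)"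
    and Id_f: "\<And>p. p \<in> Id n r \<Longrightarrow> map_words f p \<in> Id n r"
begin

lemma FA_map_words[simp]: "p \<in> FA n \<Longrightarrow> map_words f p \<in> FA n"
  by (rule map_words_FA[OF word_below_f])

lemma T_map_cls: "p \<in> FA n \<Longrightarrow> T_map n r f (cls n r p) = cls n r (map_words f p)"
  unfolding T_map_def using rep_cls[of p n r] Id_f[of "rep (cls n r p) - p"]
  by (intro cls_eqI) (auto simp: eqv_def)

lemma T_map_Tcar: "x \<in> Tcar n r \<Longrightarrow> T_map n r f x \<in> Tcar n r"
  by (auto simp: Tcar_iff T_map_cls intro: cls_Tcar)

lemma T_map_funpow: "p \<in> FA n \<Longrightarrow> (T_map n r f ^^ k) (cls n r p) = cls n r ((map_words f ^^ k) p)"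
proof (induct k)
  case (Suc k)
  have "(map_words f ^^ k) p \<in> FA n"
    by (induct k) (simp_all add: Suc(2))
  then show ?case using Suc by (simp add: T_map_cls)
qed simp

lemma T_lin_T_map:
  assumes "f [] = []" "bij_betw (T_map n r f) (Tcar n r) (Tcar n r)"
  shows "T_lin n r (T_map n r f)"
  unfolding T_lin_def using assms
  by (auto simp: Tcar_iff T_map_cls Tadd_cls Tsmul_cls Tone_cls map_words_scal_mult one_eq_scal)

lemma T_aut_T_map:
  assumes "\<And>u w. f (u @ w) = f u @ f w" "bij_betw (T_map n r f) (Tcar n r) (Tcar n r)"
  shows "T_aut n r (T_map n r f)"
proof -
  have "f [] = []" using assms(1)[of "[]" "[]"] by simp
  then show ?thesis
    unfolding T_aut_def using T_lin_T_map assms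
    by (auto simp: Tcar_iff T_map_cls Tmul_cls map_words_mult)
qed

lemma T_antiaut_T_map:
  assumes "\<And>u w. f (u @ w) = f w @ f u" "bij_betw (T_map n r f) (Tcar n r) (Tcar n r)"
  shows "T_antiaut n r (T_map n r f)"
proof -
  have "f [] = []" using assms(1)[of "[]" "[]"] by simp
  then show ?thesis
    unfolding T_antiaut_def using T_lin_T_map assms
    by (auto simp: Tcar_iff T_map_cls Tmul_cls map_words_mult_anti)
qed

end

lemma T_eq_on_generators:
  assumes l1: "T_lin n r f1" and l2: "T_lin n r f2"
    and m1: "\<forall>A\<in>Tcar n r. \<forall>B\<in>Tcar n r. f1 (Tmul n r A B) = M (f1 A) (f1 B)"
    and m2: "\<forall>A\<in>Tcar n r. \<forall>B\<in>Tcar n r. f2 (Tmul n r A B) = M (f2 A) (f2 B)"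
    and gens: "\<And>g. gidx g < n \<Longrightarrow> f1 (Tgen n r g) = f2 (Tgen n r g)"
    and "x \<in> Tcar n r"
  shows "f1 x = f2 x"
proof -
  obtain p where p: "p \<in> FA n" "x = cls n r p" using assms(6) by (auto simp: Tcar_iff)
  have words: "f1 (cls n r (mon w 1)) = f2 (cls n r (mon w 1))" if "word_below n w" for w
    using that
  proof (induct w)
    case Nil then show ?case using l1 l2 by (simp add: T_lin_def Tone_cls one_eq_scal)
  next
    case (Cons g w)
    have "cls n r (mon (g # w) 1) = Tmul n r (Tgen n r g) (cls n r (mon w 1))"
      using Cons by (simp add: Tgen_cls Tmul_cls mon_mult)
    then show ?case using m1 m2 Cons gens by (simp add: Tgen_cls)
  qed
  have "f1 (cls n r p) = f2 (cls n r p)"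
  proof (induct p rule: fa_induct)
    case zero
    have "cls n r 0 = Tsmul n r 0 (Tone n r)" by (simp add: Tsmul_cls Tone_cls)
    then show ?case using l1 l2 by (simp add: T_lin_def Tone_cls)
  next
    case (mon w c)
    then have "word_below n w" using p(1) by (simp add: FA_iff)
    moreover have "cls n r (mon w c) = Tsmul n r c (cls n r (mon w 1))"
      using calculation by (simp add: Tsmul_cls mon_mult)
    ultimately show ?case using l1 l2 words by (simp add: T_lin_def)
  next
    case (add q q')
    then have "q \<in> FA n" "q' \<in> FA n" using p(1) FA_subset by blast+
    moreover have "cls n r (q + q') = Tadd n r (cls n r q) (cls n r q')"
      using calculation by (simp add: Tadd_cls)
    ultimately show ?case using l1 l2 add by (simp add: T_lin_def)
  qed
  then show ?thesis using p(2) by simp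
qed

lemma T_aut_unique:
  "T_aut n r f1 \<Longrightarrow> T_aut n r f2 \<Longrightarrow> (\<And>g. gidx g < n \<Longrightarrow> f1 (Tgen n r g) = f2 (Tgen n r g))
   \<Longrightarrow> x \<in> Tcar n r \<Longrightarrow> f1 x = f2 x"
  unfolding T_aut_def by (rule T_eq_on_generators[where M = "Tmul n r"]) auto

lemma T_antiaut_unique:
  "T_antiaut n r f1 \<Longrightarrow> T_antiaut n r f2 \<Longrightarrow> (\<And>g. gidx g < n \<Longrightarrow> f1 (Tgen n r g) = f2 (Tgen n r g))
   \<Longrightarrow> x \<in> Tcar n r \<Longrightarrow> f1 x = f2 x"
  unfolding T_antiaut_def by (rule T_eq_on_generators[where M = "\<lambda>A B. Tmul n r B A"]) auto

abbreviation nu_T :: "nat \<Rightarrow> nat \<Rightarrow> fa set \<Rightarrow> fa set" where "nu_T n r \<equiv> T_map n r (nu_word n)"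

lemma nu_fa_Id: "0 < n \<Longrightarrow> p \<in> Id n r \<Longrightarrow> nu_fa n p \<in> Id n r"
  by (rule map_words_Id[OF word_below_nu_word _ nu_fa_Rels]) (auto simp: nu_word_def)

lemma nu_fa_funpow:
  assumes "p \<in> FA n"
  shows "(nu_fa n ^^ k) p = map_words (map (reindex (\<lambda>i. (i + k) mod n))) p"
proof (induct k)
  case 0
  show ?case using assms
    by (auto simp: FA_iff word_below_def intro!: map_words_id_on[symmetric] map_idI reindex_id_on)
next
  case (Suc k)
  have "nu_word n \<circ> map (reindex (\<lambda>i. (i + k) mod n)) = map (reindex (\<lambda>i. (i + Suc k) mod n))"
    by (simp add: nu_word_def fun_eq_iff comp_def mod_Suc_eq)
  then show ?case using Suc by (simp add: map_words_comp)
qed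

lemmas nu_T_cls = T_map_cls[OF word_below_nu_word nu_fa_Id]
  and nu_T_Tcar = T_map_Tcar[OF word_below_nu_word nu_fa_Id]
  and nu_T_funpow = T_map_funpow[OF word_below_nu_word nu_fa_Id]

lemma nu_fa_period: "p \<in> FA n \<Longrightarrow> (nu_fa n ^^ n) p = p"
  by (auto simp: nu_fa_funpow FA_iff word_below_def intro!: map_words_id_on map_idI reindex_id_on)

lemma nu_T_period: "0 < n \<Longrightarrow> x \<in> Tcar n r \<Longrightarrow> (nu_T n r ^^ n) x = x"
  by (auto simp: Tcar_iff T_map_funpow word_below_nu_word nu_fa_Id nu_fa_period)

lemma nu_T_bij: "0 < n \<Longrightarrow> bij_betw (nu_T n r) (Tcar n r) (Tcar n r)"
  using nu_T_period[of n _ r] nu_T_Tcar[of n r]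
  by (intro bij_betw_periodic[where k = "n - 1"]) auto

lemma nu_T_aut: "0 < n \<Longrightarrow> T_aut n r (nu_T n r)"
  by (rule T_aut_T_map[OF word_below_nu_word nu_fa_Id]) (simp_all add: nu_word_def nu_T_bij)

lemma nu_T_gens: "0 < n \<Longrightarrow> nu_gens n r (nu_T n r)"
  by (simp add: nu_gens_def Tgen_cls nu_T_cls nu_word_def)

lemma nu_gens_Tgen:
  "nu_gens n r f \<Longrightarrow> gidx g < n \<Longrightarrow> f (Tgen n r g) = Tgen n r (reindex (\<lambda>i. (i + 1) mod n) g)"
  by (cases g) (auto simp: nu_gens_def)

lemma nu_T_unique:
  "0 < n \<Longrightarrow> T_aut n r \<psi> \<Longrightarrow> nu_gens n r \<psi> \<Longrightarrow> x \<in> Tcar n r \<Longrightarrow> \<psi> x = nu_T n r x"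
  by (rule T_aut_unique[OF _ nu_T_aut]) (simp_all add: nu_gens_Tgen nu_T_gens)

lemma nu_T_funpow_K0: "0 < n \<Longrightarrow> (nu_T n r ^^ m) (Tgen n r (GK 0)) = Tgen n r (GK (m mod n))"
  by (simp add: Tgen_cls nu_T_funpow nu_fa_funpow)

lemma nu_T_funpow_neq_id:
  assumes "3 \<le> n" "1 \<le> r" "r < n" "0 < m" "m < n"
  shows "\<exists>x\<in>Tcar n r. (nu_T n r ^^ m) x \<noteq> x"
proof
  show "Tgen n r (GK 0) \<in> Tcar n r" using assms by (simp add: Tgen_cls)
  show "(nu_T n r ^^ m) (Tgen n r (GK 0)) \<noteq> Tgen n r (GK 0)"
  proof
    assume "(nu_T n r ^^ m) (Tgen n r (GK 0)) = Tgen n r (GK 0)"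
    then have "cls n r (fK m) = cls n r (fK 0)"
      using nu_T_funpow_K0[where r = r and m = m] assms by (simp add: Tgen_def)
    then have "fK 0 - fK m \<in> Id n r"
      using assms by (simp add: cls_eq_iff eqv_def) (metis Id_uminus minus_diff_eq)
    then show False using K_neq_mod_Id assms by simp
  qed
qed

abbreviation sigma_T :: "nat \<Rightarrow> nat \<Rightarrow> fa set \<Rightarrow> fa set" where "sigma_T n r \<equiv> T_map n r sigma_word"

lemma sigma_fa_Id: "p \<in> Id n r \<Longrightarrow> sigma_fa p \<in> Id n r"
  by (rule map_words_Id[OF word_below_sigma_word _ sigma_fa_Rels]) (auto simp: sigma_word_def)

lemmas sigma_T_cls = T_map_cls[OF word_below_sigma_word sigma_fa_Id]
  and sigma_T_Tcar = T_map_Tcar[OF word_below_sigma_word sigma_fa_Id]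

lemma sigma_fa_involutive: "sigma_fa (sigma_fa p) = p"
proof -
  have "sigma_word (sigma_word w) = w" for w
    by (simp add: sigma_word_def rev_map comp_def)
  then show ?thesis by (simp add: map_words_comp map_words_id_on)
qed

lemma sigma_T_bij: "bij_betw (sigma_T n r) (Tcar n r) (Tcar n r)"
  using sigma_T_Tcar[of n r]
  by (intro bij_betw_periodic[where k = 1])
    (auto simp: Tcar_iff sigma_T_cls map_words_FA word_below_sigma_word sigma_fa_involutive)

lemma sigma_T_antiaut: "T_antiaut n r (sigma_T n r)"
  by (rule T_antiaut_T_map[OF word_below_sigma_word sigma_fa_Id])
    (simp_all add: sigma_word_def sigma_T_bij)

lemma sigma_T_gens: "sigma_gens n r (sigma_T n r)"
  by (simp add: sigma_gens_def Tgen_cls sigma_T_cls sigma_word_def)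

lemma sigma_gens_Tgen: "sigma_gens n r f \<Longrightarrow> gidx g < n \<Longrightarrow> f (Tgen n r g) = Tgen n r (swap_gen g)"
  by (cases g) (auto simp: sigma_gens_def)

lemma sigma_T_unique:
  "T_antiaut n r \<psi> \<Longrightarrow> sigma_gens n r \<psi> \<Longrightarrow> x \<in> Tcar n r \<Longrightarrow> \<psi> x = sigma_T n r x"
  by (rule T_antiaut_unique[OF _ sigma_T_antiaut]) (simp_all add: sigma_gens_Tgen sigma_T_gens)

definition idem_factor :: "nat \<Rightarrow> nat \<Rightarrow> fa" where
  "idem_factor i m = prod_list (map (\<lambda>s. scal (1 / (vv ^ s - vv powi (- int s)))
     * (scal (vv powi (1 - int s)) * fK i - scal (vv powi (int s - 1)) * fKi i)) [1..<m + 1])"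

lemma fidem_eq: "fidem n lam = prod_list (map (\<lambda>i. idem_factor i (lam i)) [0..<n])"
  by (simp add: fidem_def idem_factor_def fprod_eq fsc_eq o_def del: upt_Suc)

lemma cartan_idem_factor: "i < n \<Longrightarrow> cartan n (idem_factor i m)"
  unfolding idem_factor_def by simp

lemma cartan_fidem: "cartan n (fidem n lam)"
  unfolding fidem_eq by (simp add: cartan_idem_factor)

lemma nu_fa_idem_factor: "nu_fa n (idem_factor i m) = idem_factor (Suc i mod n) m"
  by (simp add: idem_factor_def nu_fa_prod_list o_def del: upt_Suc)

lemma nu_T_idem:
  assumes "0 < n"
  shows "nu_T n r (Tidem n r lam) = Tidem n r (shiftc n lam)"
proof -
  obtain k where n: "n = Suc k" using assms by (cases n) auto
  let ?first = "idem_factor 0 (lam k)"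
  let ?rest = "prod_list (map (\<lambda>i. idem_factor (Suc i) (lam i)) [0..<k])"
  have "nu_fa n (fidem n lam)
      = prod_list (map (\<lambda>i. idem_factor (Suc i mod Suc k) (lam i)) [0..<k]) * ?first"
    by (simp add: fidem_eq nu_fa_prod_list o_def nu_fa_idem_factor n)
  also have "map (\<lambda>i. idem_factor (Suc i mod Suc k) (lam i)) [0..<k]
      = map (\<lambda>i. idem_factor (Suc i) (lam i)) [0..<k]"
    by (rule map_cong) simp_all
  finally have nu: "nu_fa n (fidem n lam) = ?rest * ?first" .
  have "fidem n (shiftc n lam)
      = idem_factor 0 (shiftc n lam 0)
        * prod_list (map (\<lambda>i. idem_factor (Suc i) (shiftc n lam (Suc i))) [0..<k])"
    by (simp add: fidem_eq n upt_conv_Cons map_Suc_upt[symmetric] o_def del: upt_Suc)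
  also have "shiftc n lam 0 = lam k"
    by (simp add: n shiftc_def)
  also have "map (\<lambda>i. idem_factor (Suc i) (shiftc n lam (Suc i))) [0..<k]
      = map (\<lambda>i. idem_factor (Suc i) (lam i)) [0..<k]"
    by (rule map_cong) (simp_all add: n shiftc_def flip: add_Suc_right)
  finally have shift: "fidem n (shiftc n lam) = ?first * ?rest" .
  have cartan: "cartan n ?rest" "cartan n ?first"
    by (simp_all add: n cartan_idem_factor)
  then have "cls n r (?rest * ?first) = cls n r (?first * ?rest)"
    by (simp add: cls_eq_iff cartan_FA eqv_cartan_commute)
  then show ?thesis
    using cartan_FA[OF cartan_fidem] assms
    by (simp add: Tidem_def nu_T_cls nu shift)
qed

lemma sigma_T_idem: "sigma_T n r (Tidem n r lam) = Tidem n r lam"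
  using sigma_fa_cartan[OF cartan_fidem] cartan_FA[OF cartan_fidem]
  by (simp add: Tidem_def sigma_T_cls cls_eq_iff map_words_FA word_below_sigma_word)

theorem proposition2p2p10:
  fixes n r :: nat
  assumes "3 \<le> r" and "r < n"
  shows "(\<exists>\<nu>. T_aut n r \<nu> \<and> nu_gens n r \<nu>
            \<and> (\<forall>x\<in>Tcar n r. (\<nu> ^^ n) x = x)
            \<and> (\<forall>m. 0 < m \<and> m < n \<longrightarrow> (\<exists>x\<in>Tcar n r. (\<nu> ^^ m) x \<noteq> x))
            \<and> (\<forall>\<psi>. T_aut n r \<psi> \<and> nu_gens n r \<psi> \<longrightarrow> (\<forall>x\<in>Tcar n r. \<psi> x = \<nu> x))
            \<and> (\<forall>lam\<in>Comps n r. \<nu> (Tidem n r lam) = Tidem n r (shiftc n lam)))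
       \<and> (\<exists>\<sigma>. T_antiaut n r \<sigma> \<and> sigma_gens n r \<sigma>
            \<and> (\<forall>\<psi>. T_antiaut n r \<psi> \<and> sigma_gens n r \<psi> \<longrightarrow> (\<forall>x\<in>Tcar n r. \<psi> x = \<sigma> x))
            \<and> (\<forall>lam\<in>Comps n r. \<sigma> (Tidem n r lam) = Tidem n r lam))"
proof (intro conjI exI ballI allI impI)
  have n: "0 < n" "3 \<le> n" and r: "1 \<le> r" using assms by auto
  show "T_aut n r (nu_T n r)" "nu_gens n r (nu_T n r)" using nu_T_aut nu_T_gens n(1) by blast+
  show "(nu_T n r ^^ n) x = x" if "x \<in> Tcar n r" for x using nu_T_period n(1) that .
  show "\<exists>x\<in>Tcar n r. (nu_T n r ^^ m) x \<noteq> x" if "0 < m \<and> m < n" for m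
    using nu_T_funpow_neq_id n(2) r assms(2) that by blast
  show "\<psi> x = nu_T n r x" if "T_aut n r \<psi> \<and> nu_gens n r \<psi>" "x \<in> Tcar n r" for \<psi> x
    using nu_T_unique n(1) that by blast
  show "nu_T n r (Tidem n r lam) = Tidem n r (shiftc n lam)" for lam using nu_T_idem n(1) .
  show "T_antiaut n r (sigma_T n r)" "sigma_gens n r (sigma_T n r)"
    by (rule sigma_T_antiaut sigma_T_gens)+
  show "\<psi> x = sigma_T n r x" if "T_antiaut n r \<psi> \<and> sigma_gens n r \<psi>" "x \<in> Tcar n r" for \<psi> x
    using sigma_T_unique that by blast
  show "sigma_T n r (Tidem n r lam) = Tidem n r lam" for lam by (rule sigma_T_idem)
qed

end
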